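(* Let $X$ be a finite set with $|X|\geq 2$ and put $p=2|X|-1$. Let $(K_i),(t_i),(k_i)$ be sequences of non-negative integers such that $t_i\geq 1$, $K_i=t_i+2k_i$ for all $i$, and $K_i\to\infty$. Suppose the limit \[y=\lim_{i\to\infty}|M(t_i,k_i)|^{1/K_i}\] exists and is finite. (i) If $(k_i)$ is bounded above, then $y\leq p$. (ii) If $k_i\geq1$ for all $i$ and $\bigl((t_i-1)/k_i\bigr)$ is unbounded above, then $y\leq p$. (iii) If $k_i\geq 1$ for all $i$ and $x\in[0,\infty)$ is an accumulation point of the sequence $\bigl((t_i-1)/k_i\bigr)$, then $y=\exp h(x)$, where \[h(x)=\frac{1}{x+2}\Bigl(x\log p+\bigl(p+x(p-1)\bigr)\log\bigl(p+x(p-1)\bigr)-\bigl((p-1)+x(p-1)\bigr)\log\bigl((p-1)+x(p-1)\bigr)\Bigr).\]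
   Context: $\mathrm{FIM}(X)$ is the free inverse monoid on $X$, with elements identified (Munn's model) with pairs $(T,g)$. Here $T$ is a finite connected subgraph, containing $1$, of the Cayley graph of the free group $\mathrm{FG}(X)$ with respect to $X$, and $g$ is a vertex of $T$. The trunk is the geodesic in $T$ from $1$ to $g$. Branch edges are the edges of $T$ not on the trunk. $M(t,k)$ is the set of elements of $\mathrm{FIM}(X)$ with exactly $t$ trunk edges and $k$ branch edges. For $t\ge1$, \[|M(t,k)|=(p+1)p^{t-1}\frac{2p+(t-1)(p-1)}{kp+2p+(t-1)(p-1)}\binom{kp+2p+(t-1)(p-1)}{k}.\] *)

theory Defs
  imports Complex_Main
begin

text \<open>Free group FG(X): elements are reduced words over X \<union> X^{-1}; a letter is a pair
  (x, b) with b = True meaning x and b = False meaning x^{-1}.\<close>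

definition inv_letter :: "'a \<times> bool \<Rightarrow> 'a \<times> bool" where
  "inv_letter l = (fst l, \<not> snd l)"

definition reduced :: "('a \<times> bool) list \<Rightarrow> bool" where
  "reduced w \<longleftrightarrow> (\<forall>i. Suc i < length w \<longrightarrow> w ! Suc i \<noteq> inv_letter (w ! i))"

definition FG_elems :: "'a set \<Rightarrow> ('a \<times> bool) list set" where
  "FG_elems X = {w. set (map fst w) \<subseteq> X \<and> reduced w}"

text \<open>The Cayley graph of FG(X) w.r.t. X is a tree whose edges join w and its reduced
  word with the last letter removed. A finite connected subgraph T containing 1 is
  determined by its vertex set, which is a finite prefix-closed set of reduced words
  containing the empty word; its edges are the edges from each non-identity vertex to
  its parent. Munn's model: FIM(X) = pairs (T, g) with g a vertex of T.\<close>

definition munn_tree :: "'a set \<Rightarrow> ('a \<times> bool) list set \<Rightarrow> bool" where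
  "munn_tree X V \<longleftrightarrow> finite V \<and> [] \<in> V \<and> V \<subseteq> FG_elems X \<and>
     (\<forall>w \<in> V. \<forall>n. take n w \<in> V)"

definition FIM :: "'a set \<Rightarrow> (('a \<times> bool) list set \<times> ('a \<times> bool) list) set" where
  "FIM X = {(V, g). munn_tree X V \<and> g \<in> V}"

text \<open>Number of edges of T = |V| - 1; trunk edges = length of g (geodesic from 1 to g);
  branch edges = the remaining ones.\<close>

definition trunk_edges :: "('a \<times> bool) list set \<times> ('a \<times> bool) list \<Rightarrow> nat" where
  "trunk_edges m = length (snd m)"

definition branch_edges :: "('a \<times> bool) list set \<times> ('a \<times> bool) list \<Rightarrow> nat" where
  "branch_edges m = card (fst m) - 1 - length (snd m)"

definition M :: "'a set \<Rightarrow> nat \<Rightarrow> nat \<Rightarrow> (('a \<times> bool) list set \<times> ('a \<times> bool) list) set" where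
  "M X t k = {m \<in> FIM X. trunk_edges m = t \<and> branch_edges m = k}"

definition hfun :: "real \<Rightarrow> real \<Rightarrow> real" where
  "hfun p x = (1 / (x + 2)) * (x * ln p + (p + x * (p - 1)) * ln (p + x * (p - 1))
      - ((p - 1) + x * (p - 1)) * ln ((p - 1) + x * (p - 1)))"

end

theory Submission
  imports Defs "HOL-Library.Sublist"
begin

text \<open>An element of \<open>M(t,k)\<close> is a reduced word \<open>g\<close> of length \<open>t\<close> (the trunk; \<open>(p+1)p^(t-1)\<close>
  choices) together with a forest of \<open>k\<close> branch edges hanging off the \<open>2p + (t-1)(p-1)\<close> free
  slots adjacent to the trunk. Occupying a slot opens \<open>p\<close> new ones, so the forests are counted
  by the Raney recursion, whose solution is \<open>s / (kp + s) * binomial (kp + s) k\<close>.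

  Asymptotically, Stirling-type bounds \<open>ln n! = n ln n - n + O(ln n)\<close> show that
  \<open>ln |M(t,k)| = (t-1) ln p + H(N,k) + O(ln K)\<close>, where \<open>H\<close> is the binomial entropy and
  \<open>N = kp + 2p + (t-1)(p-1)\<close>; dividing by \<open>K = t + 2k\<close> and letting \<open>(t-1)/k \<rightarrow> x\<close> yields
  \<open>h(x)\<close>. When \<open>k/K \<rightarrow> 0\<close> along a subsequence, the cruder bound
  \<open>ln binomial N k \<le> k (1 + ln (N/k))\<close> makes the branch contribution vanish, leaving at most
  \<open>ln p\<close>.\<close>

lemma reduced_snoc:
  "reduced (u @ [l]) \<longleftrightarrow> reduced u \<and> (u \<noteq> [] \<longrightarrow> l \<noteq> inv_letter (last u))"
proof
  assume r: "reduced (u @ [l])"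
  have "reduced u" unfolding reduced_def
  proof (intro allI impI)
    fix i assume "Suc i < length u"
    with r[unfolded reduced_def, rule_format, of i] show "u ! Suc i \<noteq> inv_letter (u ! i)"
      by (simp add: nth_append)
  qed
  moreover have "l \<noteq> inv_letter (last u)" if "u \<noteq> []"
  proof -
    from that obtain n where n: "length u = Suc n" by (cases u) auto
    from r[unfolded reduced_def, rule_format, of n] n show ?thesis
      by (simp add: nth_append last_conv_nth that)
  qed
  ultimately show "reduced u \<and> (u \<noteq> [] \<longrightarrow> l \<noteq> inv_letter (last u))" by blast
next
  assume a: "reduced u \<and> (u \<noteq> [] \<longrightarrow> l \<noteq> inv_letter (last u))"
  show "reduced (u @ [l])" unfolding reduced_def
  proof (intro allI impI)
    fix i assume i: "Suc i < length (u @ [l])"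
    show "(u @ [l]) ! Suc i \<noteq> inv_letter ((u @ [l]) ! i)"
    proof (cases "Suc i < length u")
      case True
      then show ?thesis using a by (simp add: nth_append reduced_def)
    next
      case False
      then have si: "Suc i = length u" using i by simp
      then have "u \<noteq> []" by auto
      then have "last u = u ! i" by (simp add: last_conv_nth flip: si)
      with si \<open>u \<noteq> []\<close> show ?thesis using a by (simp add: nth_append)
    qed
  qed
qed

lemma Nil_in_FG_elems: "[] \<in> FG_elems X"
  unfolding FG_elems_def reduced_def by simp

lemma FG_elems_take: "w \<in> FG_elems X \<Longrightarrow> take n w \<in> FG_elems X"
  unfolding FG_elems_def reduced_def by (fastforce dest: in_set_takeD)

lemma FG_elems_prefix: "w \<in> FG_elems X \<Longrightarrow> prefix a w \<Longrightarrow> a \<in> FG_elems X"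
  by (metis FG_elems_take append_eq_conv_conj prefix_def)

lemma FG_elems_butlast: "w \<in> FG_elems X \<Longrightarrow> butlast w \<in> FG_elems X"
  by (simp add: FG_elems_prefix prefixeq_butlast)

lemma length_eq_Suc_if_butlast: "c \<noteq> [] \<Longrightarrow> butlast c = u \<Longrightarrow> length c = Suc (length u)"
  by (cases c rule: rev_cases) auto

definition children :: "'a set \<Rightarrow> ('a \<times> bool) list \<Rightarrow> ('a \<times> bool) list set" where
  "children X u = {u @ [l] | l. fst l \<in> X \<and> reduced (u @ [l])}"

lemma children_iff:
  assumes "u \<in> FG_elems X"
  shows "c \<in> children X u \<longleftrightarrow> c \<in> FG_elems X \<and> c \<noteq> [] \<and> butlast c = u"
proof
  assume "c \<in> children X u"
  then show "c \<in> FG_elems X \<and> c \<noteq> [] \<and> butlast c = u"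
    using assms by (auto simp: children_def FG_elems_def image_subset_iff)
next
  assume c: "c \<in> FG_elems X \<and> c \<noteq> [] \<and> butlast c = u"
  then have "c = u @ [last c]" by auto
  moreover have "fst (last c) \<in> X" "reduced c"
    using c by (auto simp: FG_elems_def)
  ultimately show "c \<in> children X u"
    unfolding children_def by (metis (mono_tags, lifting) mem_Collect_eq)
qed

lemma children_eq_image:
  "u \<in> FG_elems X \<Longrightarrow>
    children X u = (\<lambda>l. u @ [l]) ` (X \<times> UNIV - (if u = [] then {} else {inv_letter (last u)}))"
  unfolding children_def using reduced_snoc[of u] unfolding FG_elems_def by force

lemma card_children:
  assumes "finite X" "u \<in> FG_elems X"
  shows "finite (children X u)"
    and "card (children X u) = (if u = [] then 2 * card X else 2 * card X - 1)"
proof -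
  have inj: "inj (\<lambda>l. u @ [l])" by (auto intro: injI)
  have "card (X \<times> (UNIV :: bool set)) = 2 * card X"
    using assms(1) by (simp add: card_cartesian_product)
  moreover have "u \<noteq> [] \<Longrightarrow> inv_letter (last u) \<in> X \<times> UNIV"
    using assms(2) last_in_set unfolding FG_elems_def inv_letter_def by fastforce
  ultimately show "finite (children X u)"
    and "card (children X u) = (if u = [] then 2 * card X else 2 * card X - 1)"
    unfolding children_eq_image[OF assms(2)] using assms(1)
    by (auto simp: card_image inj_on_subset[OF inj] card_Diff_singleton)
qed

definition prefix_antichain :: "'b list set \<Rightarrow> bool" where
  "prefix_antichain S \<longleftrightarrow> (\<forall>a\<in>S. \<forall>b\<in>S. prefix a b \<longrightarrow> a = b)"

definition forests :: "'a set \<Rightarrow> ('a \<times> bool) list set \<Rightarrow> nat \<Rightarrow> ('a \<times> bool) list set set" where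
  "forests X S k = {W. finite W \<and> card W = k \<and> W \<subseteq> FG_elems X \<and>
      (\<forall>w\<in>W. w \<in> S \<or> (w \<noteq> [] \<and> butlast w \<in> W))}"

text \<open>Counts forests with \<open>k\<close> vertices on \<open>s\<close> slots when each vertex opens \<open>p\<close> new slots:
  the first slot either stays empty or is occupied and replaced by \<open>p\<close> slots.\<close>

fun raney :: "nat \<Rightarrow> nat \<Rightarrow> nat \<Rightarrow> nat" where
  "raney p 0 0 = 1"
| "raney p 0 (Suc k) = 0"
| "raney p (Suc s) 0 = raney p s 0"
| "raney p (Suc s) (Suc k) = raney p s (Suc k) + raney p (s + p) k"

lemma raney_0 [simp]: "raney p s 0 = 1"
  by (induction s) auto

lemma forests_0: "forests X S 0 = {{}}"
  unfolding forests_def by auto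

lemma forests_mono: "W \<in> forests X S k \<Longrightarrow> S \<subseteq> S' \<Longrightarrow> W \<in> forests X S' k"
  unfolding forests_def by blast

lemma forests_root_prefix:
  assumes "W \<in> forests X S k" "w \<in> W"
  shows "\<exists>s\<in>S. prefix s w"
  using assms(2)
proof (induction "length w" arbitrary: w rule: less_induct)
  case less
  show ?case
  proof (cases "w \<in> S")
    case False
    with less.prems assms(1) have "w \<noteq> []" "butlast w \<in> W" unfolding forests_def by auto
    with less.hyps[of "butlast w"] show ?thesis
      using prefixeq_butlast prefix_order.trans by fastforce
  qed blast
qed

lemma forests_empty_Suc: "forests X {} (Suc k) = {}"
proof -
  have "W \<noteq> {}" if "W \<in> forests X {} (Suc k)" for W
    using that unfolding forests_def by auto
  then show ?thesis using forests_root_prefix by fastforce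
qed

lemma notin_forests:
  assumes "\<forall>s\<in>S. \<not> prefix s u" "W \<in> forests X S k"
  shows "u \<notin> W"
  using assms forests_root_prefix by blast

lemma forests_remove_root:
  assumes u: "u \<in> FG_elems X" and W: "W \<in> forests X (insert u S) (Suc k)" "u \<in> W"
  shows "W - {u} \<in> forests X (S \<union> children X u) k"
  unfolding forests_def
proof (intro CollectI conjI ballI)
  show "finite (W - {u})" "card (W - {u}) = k" "W - {u} \<subseteq> FG_elems X"
    using W unfolding forests_def by auto
  fix w assume w: "w \<in> W - {u}"
  with W have "w \<in> FG_elems X" "w \<in> S \<or> (w \<noteq> [] \<and> butlast w \<in> W)"
    unfolding forests_def by auto
  then show "w \<in> S \<union> children X u \<or> (w \<noteq> [] \<and> butlast w \<in> W - {u})"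
    using children_iff[OF u] by auto
qed

lemma forests_insert_root:
  assumes u: "u \<in> FG_elems X" and W: "W \<in> forests X (S \<union> children X u) k" "u \<notin> W"
  shows "insert u W \<in> forests X (insert u S) (Suc k)"
  unfolding forests_def
proof (intro CollectI conjI ballI)
  show "finite (insert u W)" "card (insert u W) = Suc k" "insert u W \<subseteq> FG_elems X"
    using W u unfolding forests_def by auto
  fix w assume "w \<in> insert u W"
  then show "w \<in> insert u S \<or> (w \<noteq> [] \<and> butlast w \<in> insert u W)"
    using W(1) children_iff[OF u] unfolding forests_def by auto
qed

lemma prefix_antichain_Un_children:
  assumes ac: "prefix_antichain (insert u S)" and "u \<notin> S"
  shows "prefix_antichain (S \<union> children X u)"
  unfolding prefix_antichain_def
proof (intro ballI impI)
  have ac': "a = b" if "a \<in> insert u S" "b \<in> insert u S" "prefix a b" for a b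
    using ac that unfolding prefix_antichain_def by blast
  fix a b assume a: "a \<in> S \<union> children X u" and b: "b \<in> S \<union> children X u" and "prefix a b"
  consider "a \<in> S" "b \<in> S" | l where "a \<in> S" "b = u @ [l]" | l where "a = u @ [l]" "b \<in> S"
    | l l' where "a = u @ [l]" "b = u @ [l']"
    using a b unfolding children_def by blast
  then show "a = b"
  proof cases
    case (2 l)
    with \<open>prefix a b\<close> have "a = b \<or> prefix a u" by simp
    with ac' 2 \<open>u \<notin> S\<close> show ?thesis by blast
  next
    case (3 l)
    with \<open>prefix a b\<close> have "prefix u b" by (metis prefix_order.trans prefixI)
    with ac' 3 \<open>u \<notin> S\<close> show ?thesis by blast
  qed (use ac' \<open>prefix a b\<close> in auto)
qed

lemma forests_insert_eq:
  assumes ac: "prefix_antichain (insert u S)" and u: "u \<notin> S" "u \<in> FG_elems X"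
  shows "forests X (insert u S) (Suc k) = forests X S (Suc k) \<union> insert u ` forests X (S \<union> children X u) k"
    and "u \<notin> \<Union> (forests X S (Suc k))"
    and "u \<notin> \<Union> (forests X (S \<union> children X u) k)"
proof -
  have "\<forall>s\<in>S. \<not> prefix s u"
    using ac u(1) unfolding prefix_antichain_def by blast
  moreover have "\<forall>c\<in>children X u. \<not> prefix c u"
    using prefix_length_le by (fastforce simp: children_def)
  ultimately show notin: "u \<notin> \<Union> (forests X S (Suc k))"
      "u \<notin> \<Union> (forests X (S \<union> children X u) k)"
    using notin_forests[of "S \<union> children X u" u] notin_forests[of S u] by blast+
  show "forests X (insert u S) (Suc k) = forests X S (Suc k) \<union> insert u ` forests X (S \<union> children X u) k"
  proof (intro equalityI subsetI)
    fix W assume W: "W \<in> forests X (insert u S) (Suc k)"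
    show "W \<in> forests X S (Suc k) \<union> insert u ` forests X (S \<union> children X u) k"
    proof (cases "u \<in> W")
      case True
      then have "W = insert u (W - {u})" by auto
      with forests_remove_root[OF u(2) W True] show ?thesis by blast
    next
      case False
      with W show ?thesis unfolding forests_def by auto
    qed
  next
    fix W assume "W \<in> forests X S (Suc k) \<union> insert u ` forests X (S \<union> children X u) k"
    then show "W \<in> forests X (insert u S) (Suc k)"
      using forests_mono[of _ X S "Suc k" "insert u S"] forests_insert_root[OF u(2)] notin by blast
  qed
qed

lemma card_forests:
  assumes X: "finite X"
  shows "finite S \<Longrightarrow> S \<subseteq> FG_elems X \<Longrightarrow> [] \<notin> S \<Longrightarrow> prefix_antichain S \<Longrightarrow>
    finite (forests X S k) \<and> card (forests X S k) = raney (2 * card X - 1) (card S) k"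
proof (induction k arbitrary: S)
  case 0
  then show ?case by (simp add: forests_0)
next
  case (Suc k)
  from Suc.prems show ?case
  proof (induction S rule: finite_induct)
    case empty
    then show ?case by (simp add: forests_empty_Suc)
  next
    case (insert u S)
    let ?S' = "S \<union> children X u"
    have u: "u \<in> FG_elems X" "u \<noteq> []" using insert.prems by auto
    have ch: "finite (children X u)" "card (children X u) = 2 * card X - 1"
      using card_children[OF X u(1)] u(2) by auto
    have "S \<inter> children X u = {}"
      using insert.prems(3) insert.hyps(2) prefix_length_le
      unfolding prefix_antichain_def children_def by fastforce
    then have card_S': "card ?S' = card S + (2 * card X - 1)"
      using card_Un_disjoint insert.hyps(1) ch by metis
    have IH_S: "finite (forests X S (Suc k)) \<and>
        card (forests X S (Suc k)) = raney (2 * card X - 1) (card S) (Suc k)"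
      using insert.IH insert.prems unfolding prefix_antichain_def by auto
    have "?S' \<subseteq> FG_elems X" "[] \<notin> ?S'"
      using insert.prems children_iff[OF u(1)] by auto
    with Suc.IH[of ?S'] have IH_S': "finite (forests X ?S' k) \<and>
        card (forests X ?S' k) = raney (2 * card X - 1) (card ?S') k"
      using insert.hyps ch prefix_antichain_Un_children[OF insert.prems(3)] by blast
    note split = forests_insert_eq[OF insert.prems(3) insert.hyps(2) u(1)]
    have "inj_on (insert u) (forests X ?S' k)"
      using split(3) by (intro inj_onI) (metis insert_ident UnionI)
    moreover have "forests X S (Suc k) \<inter> insert u ` forests X ?S' k = {}"
      using split(2) by blast
    ultimately show ?case
      unfolding split(1) using IH_S IH_S' card_S' insert.hyps
      by (simp add: card_Un_disjoint card_image)
  qed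
qed

lemma raney_closed_form:
  assumes p: "p \<ge> 1"
  shows "(k * p + s) * raney p s k = s * ((k * p + s) choose k)"
proof (induction k arbitrary: s)
  case 0
  then show ?case by simp
next
  case (Suc k)
  note IH_k = Suc.IH
  show ?case
  proof (induction s)
    case (Suc s)
    define N where "N = Suc k * p + s"
    define A where "A = N choose Suc k"
    define B where "B = N choose k"
    have IH_s: "N * raney p s (Suc k) = s * A"
      using Suc.IH unfolding N_def A_def by simp
    have IH_sp: "N * raney p (s + p) k = (s + p) * B"
      using IH_k[of "s + p"] unfolding N_def B_def by (simp add: algebra_simps)
    have absorb: "Suc N * B = (A + B) * Suc k"
      using Suc_times_binomial_eq[of N k] unfolding A_def B_def by simp
    have "(int k + 1) * (int A + int B) = (int N + 1) * int B"
      using arg_cong[OF absorb, of int] by (simp add: algebra_simps)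
    moreover have "int N = (int k + 1) * int p + int s"
      unfolding N_def by (simp add: algebra_simps)
    ultimately have "(int N + 1) * (int s * int A + (int s + int p) * int B)
        = int N * (int s + 1) * (int A + int B)"
      by algebra
    then have "N * ((N + 1) * raney p (Suc s) (Suc k)) = N * ((s + 1) * (A + B))"
      using IH_s IH_sp by (simp add: algebra_simps flip: of_nat_mult of_nat_add of_nat_Suc)
    then have "(N + 1) * raney p (Suc s) (Suc k) = (s + 1) * (A + B)"
      using p unfolding N_def by simp
    moreover have "Suc k * p + Suc s = N + 1" "(N + 1) choose Suc k = A + B"
      unfolding N_def A_def B_def by simp_all
    ultimately show ?case by simp
  qed simp
qed

text \<open>The free slots along the trunk \<open>g\<close>: the vertices adjacent to the geodesic from \<open>1\<close>
  to \<open>g\<close> that are not on it.\<close>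

definition slots :: "'a set \<Rightarrow> ('a \<times> bool) list \<Rightarrow> ('a \<times> bool) list set" where
  "slots X g = {c \<in> FG_elems X. c \<noteq> [] \<and> prefix (butlast c) g \<and> \<not> prefix c g}"

lemma slots_Nil: "slots X [] = children X []"
  by (rule set_eqI) (auto simp: slots_def children_iff[OF Nil_in_FG_elems])

lemma slots_snoc:
  assumes gl: "g @ [l] \<in> FG_elems X"
  shows "slots X (g @ [l]) = (slots X g - {g @ [l]}) \<union> children X (g @ [l])"
proof (rule set_eqI)
  fix c
  have "c \<noteq> g @ [l] \<and> \<not> prefix c g" if "c \<noteq> []" "butlast c = g @ [l]"
    using length_eq_Suc_if_butlast[OF that] prefix_length_le[of c g] by auto
  then show "c \<in> slots X (g @ [l]) \<longleftrightarrow> c \<in> (slots X g - {g @ [l]}) \<union> children X (g @ [l])"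
    by (auto simp: slots_def children_iff[OF gl])
qed

lemma slots_antichain: "prefix_antichain (slots X g)"
  unfolding prefix_antichain_def
proof (intro ballI impI)
  fix a b assume a: "a \<in> slots X g" and b: "b \<in> slots X g" and "prefix a b"
  show "a = b"
  proof (rule ccontr)
    assume "a \<noteq> b"
    with \<open>prefix a b\<close> b have "prefix a (butlast b)"
      by (cases b rule: rev_cases) (auto simp: slots_def)
    with b have "prefix a g" using prefix_order.trans by (auto simp: slots_def)
    with a show False by (simp add: slots_def)
  qed
qed

lemma card_slots:
  assumes X: "finite X"
  shows "g \<in> FG_elems X \<Longrightarrow>
    finite (slots X g) \<and> card (slots X g) = 2 * card X + length g * (2 * card X - 2)"
proof (induction g rule: rev_induct)
  case Nil
  then show ?case using card_children[OF X Nil_in_FG_elems] by (simp add: slots_Nil)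
next
  case (snoc l g)
  note IH = snoc.IH[OF FG_elems_butlast[OF snoc.prems, simplified]]
  have "fst l \<in> X"
    using snoc.prems by (simp add: FG_elems_def)
  then have "card X \<ge> 1"
    using X by (auto simp: Suc_le_eq card_gt_0_iff)
  have "g @ [l] \<in> slots X g"
    using snoc.prems by (simp add: slots_def)
  have ch: "finite (children X (g @ [l]))" "card (children X (g @ [l])) = 2 * card X - 1"
    using card_children[OF X snoc.prems] by auto
  have "(slots X g - {g @ [l]}) \<inter> children X (g @ [l]) = {}"
    by (auto simp: slots_def children_iff[OF snoc.prems] dest: prefix_length_le)
  then have "card (slots X (g @ [l])) = card (slots X g - {g @ [l]}) + card (children X (g @ [l]))"
    unfolding slots_snoc[OF snoc.prems] using IH ch by (simp add: card_Un_disjoint)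
  also have "\<dots> = card (slots X g) - 1 + (2 * card X - 1)"
    using IH ch \<open>g @ [l] \<in> slots X g\<close> by simp
  also have "\<dots> = 2 * card X + length (g @ [l]) * (2 * card X - 2)"
    using IH \<open>card X \<ge> 1\<close> by (cases "card X") (auto simp: algebra_simps)
  finally show ?case using IH ch unfolding slots_snoc[OF snoc.prems] by simp
qed

definition FG_sphere :: "'a set \<Rightarrow> nat \<Rightarrow> ('a \<times> bool) list set" where
  "FG_sphere X t = {g \<in> FG_elems X. length g = t}"

lemma FG_sphere_Suc: "FG_sphere X (Suc t) = (\<Union>u\<in>FG_sphere X t. children X u)"
proof (intro equalityI subsetI)
  fix w assume w: "w \<in> FG_sphere X (Suc t)"
  then have "butlast w \<in> FG_elems X" "w \<noteq> []"
    using FG_elems_butlast by (auto simp: FG_sphere_def)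
  then have "w \<in> children X (butlast w)" "butlast w \<in> FG_sphere X t"
    using w children_iff by (auto simp: FG_sphere_def)
  then show "w \<in> (\<Union>u\<in>FG_sphere X t. children X u)" by blast
next
  fix w assume "w \<in> (\<Union>u\<in>FG_sphere X t. children X u)"
  then obtain u where u: "u \<in> FG_elems X" "length u = t" "w \<in> children X u"
    by (auto simp: FG_sphere_def)
  then show "w \<in> FG_sphere X (Suc t)"
    using children_iff[OF u(1)] length_eq_Suc_if_butlast[of w u] by (auto simp: FG_sphere_def)
qed

lemma card_FG_sphere:
  assumes X: "finite X"
  shows "finite (FG_sphere X t) \<and>
    card (FG_sphere X t) = (if t = 0 then 1 else 2 * card X * (2 * card X - 1) ^ (t - 1))"
proof (induction t)
  case 0
  have "FG_sphere X 0 = {[]}"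
    unfolding FG_sphere_def using Nil_in_FG_elems by auto
  then show ?case by simp
next
  case (Suc t)
  have ch: "finite (children X u)"
    "card (children X u) = (if t = 0 then 2 * card X else 2 * card X - 1)"
    if "u \<in> FG_sphere X t" for u
    using that card_children[OF X, of u] by (auto simp: FG_sphere_def)
  have "\<forall>u\<in>FG_sphere X t. \<forall>v\<in>FG_sphere X t. u \<noteq> v \<longrightarrow> children X u \<inter> children X v = {}"
    using children_iff[of _ X] by (auto simp: FG_sphere_def)
  then have "card (FG_sphere X (Suc t)) = (\<Sum>u\<in>FG_sphere X t. card (children X u))"
    unfolding FG_sphere_Suc using Suc.IH ch(1) by (intro card_UN_disjoint) simp_all
  also have "\<dots> = card (FG_sphere X t) * (if t = 0 then 2 * card X else 2 * card X - 1)"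
    using ch(2) by simp
  also have "\<dots> = 2 * card X * (2 * card X - 1) ^ t"
    using Suc.IH by (cases t) (simp_all add: algebra_simps)
  finally show ?case
    unfolding FG_sphere_Suc using Suc.IH ch by auto
qed

lemma mem_M_iff:
  "(V, g) \<in> M X t k \<longleftrightarrow> finite V \<and> [] \<in> V \<and> V \<subseteq> FG_elems X \<and> (\<forall>w\<in>V. \<forall>n. take n w \<in> V)
     \<and> g \<in> V \<and> length g = t \<and> card V - 1 - length g = k"
  unfolding M_def FIM_def munn_tree_def trunk_edges_def branch_edges_def by auto

lemma card_prefixes_set: "finite {a. prefix a g}" "card {a. prefix a g} = Suc (length g)"
proof -
  have "{a. prefix a g} = set (prefixes g)" by (simp add: set_prefixes_eq)
  then show "finite {a. prefix a g}" "card {a. prefix a g} = Suc (length g)" by simp_all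
qed

lemma forests_slots_take:
  assumes W: "W \<in> forests X (slots X g) k"
  shows "w \<in> W \<Longrightarrow> take n w \<in> W \<union> {a. prefix a g}"
proof (induction "length w" arbitrary: w rule: less_induct)
  case less
  show ?case
  proof (cases "n < length w")
    case True
    then have take_eq: "take n w = take n (butlast w)" by (simp add: take_butlast)
    have "w \<in> slots X g \<or> (w \<noteq> [] \<and> butlast w \<in> W)"
      using W less.prems unfolding forests_def by blast
    then show ?thesis
    proof
      assume "w \<in> slots X g"
      then have "prefix (butlast w) g" by (simp add: slots_def)
      then have "prefix (take n (butlast w)) g" by (metis take_is_prefix prefix_order.trans)
      then show ?thesis using take_eq by simp
    next
      assume "w \<noteq> [] \<and> butlast w \<in> W"
      then show ?thesis using less.hyps[of "butlast w"] take_eq by simp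
    qed
  qed (use less.prems in simp)
qed

lemma forests_slots_disjoint:
  assumes "W \<in> forests X (slots X g) k"
  shows "W \<inter> {a. prefix a g} = {}"
proof -
  have False if "w \<in> W" "prefix w g" for w
  proof -
    obtain s where "s \<in> slots X g" "prefix s w"
      using forests_root_prefix[OF assms \<open>w \<in> W\<close>] by blast
    with \<open>prefix w g\<close> show False
      using prefix_order.trans by (auto simp: slots_def)
  qed
  then show ?thesis by blast
qed

lemma M_decompose:
  assumes "(V, g) \<in> M X t k"
  shows "g \<in> FG_sphere X t" "{a. prefix a g} \<subseteq> V" "V - {a. prefix a g} \<in> forests X (slots X g) k"
proof -
  have V: "finite V" "V \<subseteq> FG_elems X" "\<forall>w\<in>V. \<forall>n. take n w \<in> V" "g \<in> V" "length g = t"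
    "card V - 1 - length g = k"
    using assms unfolding mem_M_iff by blast+
  then show "g \<in> FG_sphere X t" by (auto simp: FG_sphere_def)
  show trunk: "{a. prefix a g} \<subseteq> V"
  proof
    fix a assume "a \<in> {a. prefix a g}"
    then have "a = take (length a) g" by (auto simp: prefix_def)
    then show "a \<in> V" using V(3,4) by metis
  qed
  show "V - {a. prefix a g} \<in> forests X (slots X g) k"
    unfolding forests_def
  proof (intro CollectI conjI ballI)
    show "finite (V - {a. prefix a g})" "V - {a. prefix a g} \<subseteq> FG_elems X"
      using V by auto
    show "card (V - {a. prefix a g}) = k"
      using card_Diff_subset[OF card_prefixes_set(1) trunk] card_prefixes_set(2)[of g] V by simp
    fix w assume w: "w \<in> V - {a. prefix a g}"
    then have "w \<noteq> []" "butlast w \<in> V" "w \<in> FG_elems X"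
      using V(2,3) by (auto simp: butlast_conv_take)
    then show "w \<in> slots X g \<or> (w \<noteq> [] \<and> butlast w \<in> V - {a. prefix a g})"
      using w by (auto simp: slots_def)
  qed
qed

lemma M_compose:
  assumes g: "g \<in> FG_sphere X t" and W: "W \<in> forests X (slots X g) k"
  shows "(W \<union> {a. prefix a g}, g) \<in> M X t k"
proof -
  have g': "g \<in> FG_elems X" "length g = t" using g by (auto simp: FG_sphere_def)
  have W': "finite W" "card W = k" "W \<subseteq> FG_elems X" using W unfolding forests_def by simp_all
  have "\<forall>w\<in>W \<union> {a. prefix a g}. \<forall>n. take n w \<in> W \<union> {a. prefix a g}"
    using forests_slots_take[OF W] take_is_prefix prefix_order.trans by blast
  moreover have "card (W \<union> {a. prefix a g}) = k + Suc t"
    using card_Un_disjoint[OF W'(1) card_prefixes_set(1) forests_slots_disjoint[OF W]]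
      card_prefixes_set(2)[of g] W' g' by simp
  moreover have "{a. prefix a g} \<subseteq> FG_elems X"
    using FG_elems_prefix g'(1) by blast
  ultimately show ?thesis
    unfolding mem_M_iff using W' g' card_prefixes_set by auto
qed

lemma M_eq_image:
  "M X t k = (\<lambda>(g, W). (W \<union> {a. prefix a g}, g)) ` (SIGMA g:FG_sphere X t. forests X (slots X g) k)"
proof (intro equalityI subsetI)
  fix m assume m: "m \<in> M X t k"
  obtain V g where m_eq: "m = (V, g)" by (cases m)
  with M_decompose[OF m[unfolded m_eq]]
  have "(g, V - {a. prefix a g}) \<in> (SIGMA g:FG_sphere X t. forests X (slots X g) k)"
    "m = (\<lambda>(g, W). (W \<union> {a. prefix a g}, g)) (g, V - {a. prefix a g})"
    by auto
  then show "m \<in> (\<lambda>(g, W). (W \<union> {a. prefix a g}, g)) ` (SIGMA g:FG_sphere X t. forests X (slots X g) k)"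
    by (rule rev_image_eqI)
next
  fix m assume "m \<in> (\<lambda>(g, W). (W \<union> {a. prefix a g}, g)) ` (SIGMA g:FG_sphere X t. forests X (slots X g) k)"
  then obtain g W where "g \<in> FG_sphere X t" "W \<in> forests X (slots X g) k" "m = (W \<union> {a. prefix a g}, g)"
    by auto
  then show "m \<in> M X t k" by (simp add: M_compose)
qed

lemma inj_on_M_compose:
  "inj_on (\<lambda>(g, W). (W \<union> {a. prefix a g}, g)) (SIGMA g:FG_sphere X t. forests X (slots X g) k)"
proof (rule inj_onI, clarsimp)
  fix g W W' assume "W \<in> forests X (slots X g) k" "W' \<in> forests X (slots X g) k"
    and "W \<union> {a. prefix a g} = W' \<union> {a. prefix a g}"
  then show "W = W'"
    using forests_slots_disjoint[of W X g k] forests_slots_disjoint[of W' X g k] by blast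
qed

lemma card_M:
  assumes X: "finite X"
  shows "card (M X t k) = card (FG_sphere X t) * raney (2 * card X - 1) (2 * card X + t * (2 * card X - 2)) k"
proof -
  have forests: "finite (forests X (slots X g) k)"
      "card (forests X (slots X g) k) = raney (2 * card X - 1) (2 * card X + t * (2 * card X - 2)) k"
    if "g \<in> FG_sphere X t" for g
  proof -
    have "g \<in> FG_elems X" "length g = t" using that by (auto simp: FG_sphere_def)
    moreover have "slots X g \<subseteq> FG_elems X" "[] \<notin> slots X g" by (auto simp: slots_def)
    ultimately show "finite (forests X (slots X g) k)"
      "card (forests X (slots X g) k) = raney (2 * card X - 1) (2 * card X + t * (2 * card X - 2)) k"
      using card_forests[OF X, of "slots X g" k] card_slots[OF X, of g] slots_antichain[of X g]
      by simp_all
  qed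
  have "card (M X t k) = card (SIGMA g:FG_sphere X t. forests X (slots X g) k)"
    unfolding M_eq_image using card_image[OF inj_on_M_compose] .
  also have "\<dots> = (\<Sum>g\<in>FG_sphere X t. card (forests X (slots X g) k))"
    using card_FG_sphere[OF X] forests(1) by (intro card_SigmaI) auto
  also have "\<dots> = card (FG_sphere X t) * raney (2 * card X - 1) (2 * card X + t * (2 * card X - 2)) k"
    using forests(2) by simp
  finally show ?thesis .
qed

definition slot_count :: "nat \<Rightarrow> nat \<Rightarrow> nat" where
  "slot_count p t = p + 1 + t * (p - 1)"

definition raney_top :: "nat \<Rightarrow> nat \<Rightarrow> nat \<Rightarrow> nat" where
  "raney_top p t k = k * p + slot_count p t"

text \<open>The closed formula for \<open>|M(t,k)|\<close>; \<open>slot_count p t\<close> is the paper's \<open>2p + (t-1)(p-1)\<close>.\<close>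

definition fim_count :: "nat \<Rightarrow> nat \<Rightarrow> nat \<Rightarrow> real" where
  "fim_count p t k = real (p + 1) * real p ^ (t - 1) *
     (real (slot_count p t) / real (raney_top p t k)) * real (raney_top p t k choose k)"

lemma slot_count_pos: "0 < slot_count p t"
  by (simp add: slot_count_def)

lemma raney_top_bounds:
  assumes "p \<ge> 1"
  shows "k < raney_top p t k" "slot_count p t \<le> raney_top p t k"
proof -
  have "k \<le> k * p" using assms by simp
  then show "k < raney_top p t k" "slot_count p t \<le> raney_top p t k"
    unfolding raney_top_def slot_count_def by linarith+
qed

lemma card_M_eq_fim_count:
  assumes X: "finite X" "card X \<ge> 1" and t: "t \<ge> 1"
  shows "real (card (M X t k)) = fim_count (2 * card X - 1) t k"
proof -
  define p where "p = 2 * card X - 1"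
  have p: "p \<ge> 1" "p + 1 = 2 * card X" "p - 1 = 2 * card X - 2"
    using X(2) unfolding p_def by linarith+
  have "card (FG_sphere X t) = (p + 1) * p ^ (t - 1)"
    using card_FG_sphere[OF X(1), of t] t p(2) by (simp add: p_def)
  moreover have "2 * card X + t * (2 * card X - 2) = slot_count p t"
    unfolding slot_count_def using p(2,3) by simp
  ultimately have card_M: "card (M X t k) = (p + 1) * p ^ (t - 1) * raney p (slot_count p t) k"
    using card_M[OF X(1), of t k, folded p_def] by simp
  have "raney_top p t k * raney p (slot_count p t) k = slot_count p t * (raney_top p t k choose k)"
    using raney_closed_form[OF p(1)] unfolding raney_top_def by simp
  moreover have "raney_top p t k > 0"
    using raney_top_bounds(1)[OF p(1), where t=t and k=k] by simp
  ultimately have "real (raney p (slot_count p t) k) =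
      real (slot_count p t) / real (raney_top p t k) * real (raney_top p t k choose k)"
    by (simp add: field_simps flip: of_nat_mult)
  then show ?thesis
    unfolding p_def[symmetric] card_M fim_count_def by (simp add: algebra_simps)
qed

lemma raney_top_le:
  assumes "p \<ge> 1" "t \<ge> 1"
  shows "real (raney_top p t k) \<le> 2 * (real p + 1) * real (t + 2 * k)"
proof -
  have "real (raney_top p t k) = real k * real p + real p + 1 + real t * (real p - 1)"
    using assms unfolding raney_top_def slot_count_def by simp
  then have "2 * (real p + 1) * real (t + 2 * k) - real (raney_top p t k)
      = real p * (real t - 1) + 3 * real t - 1 + 3 * (real p * real k) + 4 * real k"
    by (simp add: algebra_simps)
  moreover have "0 \<le> real p * (real t - 1) + 3 * real t - 1 + 3 * (real p * real k) + 4 * real k"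
  proof -
    have "0 \<le> real p * (real t - 1)" "0 \<le> real p * real k" "1 \<le> real t"
      using assms by simp_all
    then show ?thesis by linarith
  qed
  ultimately show ?thesis by simp
qed

lemma fim_count_pos:
  assumes "p \<ge> 1"
  shows "fim_count p t k > 0"
  using raney_top_bounds[OF assms, where t=t and k=k] assms slot_count_pos[of p t] unfolding fim_count_def by simp

lemma ln_fim_count:
  assumes "p \<ge> 1"
  shows "ln (fim_count p t k) = ln (real p + 1) + real (t - 1) * ln (real p)
     + (ln (real (slot_count p t)) - ln (real (raney_top p t k))) + ln (real (raney_top p t k choose k))"
  using raney_top_bounds[OF assms, where t=t and k=k] slot_count_pos[of p t] assms
  unfolding fim_count_def
  by (simp add: ln_mult ln_div ln_realpow add.commute)

lemma ln_slot_count_minus_ln_raney_top: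
  assumes "p \<ge> 1"
  shows "- ln (real (raney_top p t k)) \<le> ln (real (slot_count p t)) - ln (real (raney_top p t k))"
    and "ln (real (slot_count p t)) - ln (real (raney_top p t k)) \<le> 0"
  using raney_top_bounds[OF assms, where t=t and k=k] slot_count_pos[of p t] by simp_all

lemma ln_Suc_minus_ln_bounds:
  assumes n: "(n::real) > 0"
  shows "1 / (n + 1) \<le> ln (n + 1) - ln n" and "ln (n + 1) - ln n \<le> 1 / n"
proof -
  have "ln n - ln (n + 1) = ln (n / (n + 1))" using n by (simp add: ln_div)
  also have "\<dots> \<le> n / (n + 1) - 1" using n by (intro ln_le_minus_one) simp
  also have "\<dots> = - (1 / (n + 1))" using n by (simp add: field_simps)
  finally show "1 / (n + 1) \<le> ln (n + 1) - ln n" by simp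
  have "ln (n + 1) - ln n = ln (1 + 1 / n)" using n by (simp add: ln_div field_simps)
  also have "\<dots> \<le> 1 / n" using n by (intro ln_add_one_self_le_self) simp
  finally show "ln (n + 1) - ln n \<le> 1 / n" .
qed

lemma ln_fact_Stirling_remainder_bounds:
  assumes "n \<ge> 1"
  shows "1 \<le> ln (fact n) - real n * ln (real n) + real n
     \<and> ln (fact n) - real n * ln (real n) + real n \<le> 1 + ln (real n)"
  using assms
proof (induction n rule: nat_induct_at_least)
  case (Suc n)
  define d where "d = ln (real n + 1) - ln (real n)"
  have n0: "real n > 0" using Suc.hyps by simp
  have "real n * d \<le> 1" "1 \<le> (real n + 1) * d"
    using ln_Suc_minus_ln_bounds[OF n0] n0 unfolding d_def by (simp_all add: field_simps)
  moreover have "ln (fact (Suc n) :: real) = ln (real n + 1) + ln (fact n)"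
    by (simp add: ln_mult add.commute)
  then have "ln (fact (Suc n)) - real (Suc n) * ln (real (Suc n)) + real (Suc n)
     = (ln (fact n) - real n * ln (real n) + real n) + 1 - real n * d"
    unfolding d_def by (simp add: algebra_simps)
  moreover have "1 + ln (real (Suc n)) = 1 + ln (real n) + d"
    unfolding d_def by (simp add: add.commute)
  ultimately show ?case using Suc.IH by (simp add: algebra_simps)
qed simp

lemma ln_fact_bounds:
  "real n * ln (real n) - real n \<le> ln (fact n)"
  "ln (fact n) \<le> real n * ln (real n) - real n + 1 + ln (real n + 1)"
proof -
  have "real n * ln (real n) - real n \<le> ln (fact n)
    \<and> ln (fact n) \<le> real n * ln (real n) - real n + 1 + ln (real n + 1)"
  proof (cases "n \<ge> 1")
    case True
    have "ln (real n) \<le> ln (real n + 1)" using True by simp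
    with ln_fact_Stirling_remainder_bounds[OF True] show ?thesis by linarith
  next
    case False
    then have "n = 0" by simp
    then show ?thesis by simp
  qed
  then show "real n * ln (real n) - real n \<le> ln (fact n)"
    "ln (fact n) \<le> real n * ln (real n) - real n + 1 + ln (real n + 1)"
    by simp_all
qed

definition binom_entropy :: "real \<Rightarrow> real \<Rightarrow> real" where
  "binom_entropy N k = N * ln N - k * ln k - (N - k) * ln (N - k)"

lemma ln_binomial_approx:
  assumes "k \<le> N"
  shows "\<bar>ln (real (N choose k)) - binom_entropy (real N) (real k)\<bar> \<le> 2 * (1 + ln (real N + 1))"
proof -
  have "real (N choose k) = fact N / (fact k * fact (N - k))"
    using binomial_fact[OF assms] by simp
  then have ln_choose: "ln (real (N choose k)) = ln (fact N) - ln (fact k) - ln (fact (N - k))"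
    by (simp add: ln_div ln_mult)
  have key: "\<bar>a - b - c - (n * ln n - j * ln j - (n - j) * ln (n - j))\<bar> \<le> 2 * (1 + ln (n + 1))"
    if "n * ln n - n \<le> a" "a \<le> n * ln n - n + 1 + ln (n + 1)"
      "j * ln j - j \<le> b" "b \<le> j * ln j - j + 1 + ln (j + 1)"
      "(n - j) * ln (n - j) - (n - j) \<le> c" "c \<le> (n - j) * ln (n - j) - (n - j) + 1 + ln (n - j + 1)"
      "ln (j + 1) \<le> ln (n + 1)" "ln (n - j + 1) \<le> ln (n + 1)" "0 \<le> ln (n + 1)"
    for a b c n j :: real
    using that unfolding abs_le_iff by (simp add: algebra_simps)
  have "real (N - k) = real N - real k" using assms by simp
  then show ?thesis
    unfolding ln_choose binom_entropy_def
    by (intro key) (use ln_fact_bounds[of N] ln_fact_bounds[of k] ln_fact_bounds[of "N - k"] assms in simp_all)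
qed

lemma ln_binomial_le:
  assumes "1 \<le> k" "k \<le> N"
  shows "ln (real (N choose k)) \<le> real k * (1 + ln (real N) - ln (real k))"
proof -
  have "real ((N choose k) * fact k) \<le> real (N ^ k)"
    using binomial_fact_pow[of N k] by (simp only: of_nat_le_iff)
  then have "real (N choose k) * fact k \<le> real N ^ k" by simp
  moreover have pos: "real (N choose k) > 0" "(fact k :: real) > 0" "real N > 0"
    using assms by simp_all
  ultimately have "ln (real (N choose k) * fact k) \<le> ln (real N ^ k)"
    by (subst ln_le_cancel_iff) auto
  then have "ln (real (N choose k)) + ln (fact k) \<le> real k * ln (real N)"
    using pos by (simp add: ln_mult ln_realpow)
  then show ?thesis using ln_fact_bounds(1)[of k] by (simp add: algebra_simps)
qed

lemma ln_fim_count_approx: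
  assumes p: "p \<ge> 1"
  shows "\<bar>ln (fim_count p t k) - (real (t - 1) * ln (real p) + binom_entropy (real (raney_top p t k)) (real k))\<bar>
     \<le> ln (real p + 1) + 3 * ln (real (raney_top p t k) + 1) + 2"
proof -
  have key: "\<bar>lp + x + d + a - (x + e)\<bar> \<le> lp + 3 * l + 2"
    if "\<bar>a - e\<bar> \<le> 2 * (1 + l)" "n \<le> l" "0 \<le> lp" "- n \<le> d" "d \<le> 0" for lp x d a e n l :: real
    using that by (simp add: abs_le_iff)
  show ?thesis
    unfolding ln_fim_count[OF p]
  proof (rule key)
    show "\<bar>ln (real (raney_top p t k choose k)) - binom_entropy (real (raney_top p t k)) (real k)\<bar>
      \<le> 2 * (1 + ln (real (raney_top p t k) + 1))"
      using ln_binomial_approx raney_top_bounds(1)[OF p, where t=t and k=k] by simp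
    show "ln (real (raney_top p t k)) \<le> ln (real (raney_top p t k) + 1)"
      using raney_top_bounds(1)[OF p, where t=t and k=k] by simp
  qed (use ln_slot_count_minus_ln_raney_top[OF p, where t=t and k=k] in simp_all)
qed

lemma self_le_sqrt: "0 \<le> x \<Longrightarrow> x \<le> 1 \<Longrightarrow> x \<le> sqrt (x::real)"
  by (intro real_le_rsqrt) (simp add: power2_eq_square mult_left_le)

lemma neg_mult_ln_le_sqrt:
  assumes "0 < q" "q \<le> (1::real)"
  shows "- (q * ln q) \<le> 2 * sqrt q"
proof -
  have sq: "sqrt q > 0" using assms by simp
  have "ln (1 / sqrt q) \<le> 1 / sqrt q - 1" using sq by (intro ln_le_minus_one) simp
  then have "- ln (sqrt q) \<le> 1 / sqrt q - 1" using sq by (simp add: ln_div)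
  moreover have "- (q * ln q) = 2 * q * (- ln (sqrt q))" using assms by (simp add: ln_sqrt)
  ultimately have "- (q * ln q) \<le> 2 * q * (1 / sqrt q - 1)"
    using assms by (metis mult_left_mono mult_nonneg_nonneg less_eq_real_def zero_le_numeral)
  also have "\<dots> \<le> 2 * q * (1 / sqrt q)" using assms by (intro mult_left_mono) auto
  also have "\<dots> = 2 * (q / sqrt q)" by simp
  also have "\<dots> = 2 * sqrt q" using assms by (simp add: real_div_sqrt)
  finally show ?thesis .
qed

lemma ln_binomial_raney_top_le:
  assumes p: "p \<ge> 1" and t: "t \<ge> 1"
  defines "c \<equiv> 1 + ln (2 * (real p + 1))"
  shows "ln (real (raney_top p t k choose k))
    \<le> real (t + 2 * k) * ((c + 2) * sqrt (real k / real (t + 2 * k)))"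
proof (cases "k = 0")
  case False
  define K where "K = real (t + 2 * k)"
  define q where "q = real k / K"
  have K0: "K > 0" using t unfolding K_def by simp
  have k0: "real k > 0" using False by simp
  have q: "0 < q" "q \<le> 1" using K0 k0 unfolding q_def K_def by auto
  have "ln (real (raney_top p t k)) \<le> ln (2 * (real p + 1) * K)"
    using raney_top_le[OF p t, of k] raney_top_bounds(1)[OF p, where t=t and k=k]
    unfolding K_def by simp
  also have "\<dots> = ln (2 * (real p + 1)) + ln K" using K0 by (simp add: ln_mult)
  finally have ln_top: "ln (real (raney_top p t k)) \<le> ln (2 * (real p + 1)) + ln K" .
  have "ln (real (raney_top p t k choose k)) \<le> real k * (1 + ln (real (raney_top p t k)) - ln (real k))"
    using ln_binomial_le False raney_top_bounds(1)[OF p, where t=t and k=k] by simp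
  also have "\<dots> \<le> real k * (c + ln K - ln (real k))"
    using ln_top k0 unfolding c_def by (intro mult_left_mono) auto
  also have "\<dots> = K * (q * c + (- (q * ln q)))"
    using K0 k0 by (simp add: q_def ln_div field_simps)
  also have "\<dots> \<le> K * (sqrt q * c + 2 * sqrt q)"
  proof -
    have "q \<le> sqrt q" using q self_le_sqrt by simp
    moreover have "c \<ge> 0" unfolding c_def by simp
    ultimately show ?thesis
      using neg_mult_ln_le_sqrt[OF q] K0 by (intro mult_left_mono add_mono mult_right_mono) auto
  qed
  finally show ?thesis unfolding K_def q_def by (simp add: algebra_simps)
qed simp

lemma ln_fim_count_div_le:
  assumes p: "p \<ge> 1" and t: "t \<ge> 1"
  defines "C \<equiv> ln (real p + 1) + 3 + ln (2 * (real p + 1))"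
  shows "ln (fim_count p t k) / real (t + 2 * k) \<le> ln (real p) + C * sqrt ((real k + 1) / real (t + 2 * k))"
proof -
  define K where "K = real (t + 2 * k)"
  define r where "r = (real k + 1) / K"
  have K: "K \<ge> 1" using t unfolding K_def by simp
  have r: "1 / K \<le> r" "real k / K \<le> r" "r \<le> 1"
    using K t unfolding r_def K_def by (simp_all add: divide_right_mono)
  moreover have "r \<le> sqrt r"
    using r K by (intro self_le_sqrt) (auto simp: r_def)
  ultimately have sqrt_r: "1 / K \<le> sqrt r" "sqrt (real k / K) \<le> sqrt r"
    by simp_all
  have "real (t - 1) * ln (real p) \<le> K * ln (real p)"
    using p unfolding K_def by (intro mult_right_mono) auto
  then have "ln (fim_count p t k) \<le> ln (real p + 1) + K * ln (real p)
      + K * ((1 + ln (2 * (real p + 1)) + 2) * sqrt (real k / K))"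
    unfolding ln_fim_count[OF p] K_def
    using ln_slot_count_minus_ln_raney_top(2)[OF p, where t=t and k=k] ln_binomial_raney_top_le[OF p t, of k]
    by simp
  then have "ln (fim_count p t k) / K
      \<le> ln (real p + 1) * (1 / K) + ln (real p) + (3 + ln (2 * (real p + 1))) * sqrt (real k / K)"
    using K by (simp add: field_simps)
  also have "\<dots> \<le> ln (real p + 1) * sqrt r + ln (real p) + (3 + ln (2 * (real p + 1))) * sqrt r"
    using sqrt_r by (intro add_mono mult_left_mono) simp_all
  finally show ?thesis
    unfolding C_def K_def r_def by (simp add: algebra_simps)
qed

lemma tendsto_le_if_frequently_le:
  fixes f :: "'b \<Rightarrow> 'a::{linorder_topology, dense_linorder}"
  assumes lim: "(f \<longlongrightarrow> y) F" and freq: "\<And>c. b < c \<Longrightarrow> \<exists>\<^sub>F x in F. f x \<le> c"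
  shows "y \<le> b"
proof (rule ccontr)
  assume "\<not> y \<le> b"
  then have "b < y" by simp
  then obtain c where "b < c" "c < y" using dense by blast
  then have "\<exists>\<^sub>F x in F. c < f x \<and> f x \<le> c"
    using frequently_eventually_conj freq order_tendstoD(1)[OF lim] by blast
  then show False by (auto dest: frequently_ex)
qed

lemma fim_growth_le:
  assumes p: "p \<ge> 1" and t: "\<And>i. t i \<ge> 1"
    and lim: "(\<lambda>i. exp (ln (fim_count p (t i) (k i)) / real (t i + 2 * k i))) \<longlonglongrightarrow> y"
    and small: "\<And>\<epsilon>. \<epsilon> > 0 \<Longrightarrow> \<exists>\<^sub>F i in sequentially. (real (k i) + 1) / real (t i + 2 * k i) \<le> \<epsilon>"
  shows "y \<le> real p"
proof (rule tendsto_le_if_frequently_le[OF lim])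
  fix c assume "real p < c"
  define C where "C = ln (real p + 1) + 3 + ln (2 * (real p + 1))"
  define \<epsilon> where "\<epsilon> = ln c - ln (real p)"
  have "0 \<le> ln (real p + 1)" "0 \<le> ln (2 * (real p + 1))" by simp_all
  then have C: "C > 0" unfolding C_def by linarith
  have "\<epsilon> > 0" using \<open>real p < c\<close> p unfolding \<epsilon>_def by simp
  with small have "\<exists>\<^sub>F i in sequentially. (real (k i) + 1) / real (t i + 2 * k i) \<le> (\<epsilon> / C)\<^sup>2"
    using C by simp
  then show "\<exists>\<^sub>F i in sequentially. exp (ln (fim_count p (t i) (k i)) / real (t i + 2 * k i)) \<le> c"
  proof (rule frequently_elim1)
    fix i assume "(real (k i) + 1) / real (t i + 2 * k i) \<le> (\<epsilon> / C)\<^sup>2"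
    then have "sqrt ((real (k i) + 1) / real (t i + 2 * k i)) \<le> \<epsilon> / C"
      using real_sqrt_le_mono C \<open>\<epsilon> > 0\<close> by (metis divide_pos_pos real_sqrt_abs abs_of_pos)
    then have "C * sqrt ((real (k i) + 1) / real (t i + 2 * k i)) \<le> \<epsilon>"
      using C by (simp add: field_simps)
    then have "ln (fim_count p (t i) (k i)) / real (t i + 2 * k i) \<le> ln c"
      using ln_fim_count_div_le[OF p t, of i "k i"] unfolding C_def \<epsilon>_def by simp
    then have "exp (ln (fim_count p (t i) (k i)) / real (t i + 2 * k i)) \<le> exp (ln c)"
      by simp
    also have "exp (ln c) = c" using \<open>real p < c\<close> of_nat_0_le_iff[of p] by simp
    finally show "exp (ln (fim_count p (t i) (k i)) / real (t i + 2 * k i)) \<le> c" .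
  qed
qed

lemma frequently_gt_if_not_bdd_above:
  fixes f :: "nat \<Rightarrow> real"
  assumes "\<not> bdd_above (range f)"
  shows "\<exists>\<^sub>F i in sequentially. R < f i"
proof (rule ccontr)
  assume "\<not> (\<exists>\<^sub>F i in sequentially. R < f i)"
  then obtain N where "\<And>i. i \<ge> N \<Longrightarrow> f i \<le> R"
    unfolding frequently_sequentially by (auto simp: not_less)
  then have "range f \<subseteq> f ` {..<N} \<union> {..R}"
    by (metis UnCI atMost_iff image_eqI image_subsetI lessThan_iff not_le)
  then have "bdd_above (range f)"
    by (rule bdd_above_mono[rotated]) simp
  with assms show False ..
qed

lemma eventually_ratio_le_if_bdd_above:
  assumes "bdd_above (range k)" "filterlim K at_top sequentially" "\<epsilon> > 0"
  shows "\<forall>\<^sub>F i in sequentially. (real (k i) + 1) / real (K i) \<le> \<epsilon>"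
proof -
  obtain B where B: "\<And>i. k i \<le> B" using assms(1) unfolding bdd_above_def by blast
  have "(\<lambda>i. (real B + 1) * inverse (real (K i))) \<longlonglongrightarrow> (real B + 1) * 0"
    using filterlim_compose[OF filterlim_real_sequentially assms(2)]
    by (intro tendsto_intros tendsto_inverse_0_at_top) (simp add: o_def)
  from order_tendstoD(2)[OF this, of \<epsilon>]
  have "\<forall>\<^sub>F i in sequentially. (real B + 1) / real (K i) < \<epsilon>"
    using assms(3) by (simp add: divide_inverse)
  then show ?thesis
  proof (rule eventually_mono)
    fix i assume "(real B + 1) / real (K i) < \<epsilon>"
    moreover have "(real (k i) + 1) / real (K i) \<le> (real B + 1) / real (K i)"
      using B[of i] by (simp add: divide_right_mono)
    ultimately show "(real (k i) + 1) / real (K i) \<le> \<epsilon>" by simp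
  qed
qed

lemma frequently_ratio_le_if_unbounded_slope:
  assumes k: "\<And>i. k i \<ge> 1" and unb: "\<not> bdd_above (range (\<lambda>i. (real (t i) - 1) / real (k i)))"
    and "\<epsilon> > 0"
  shows "\<exists>\<^sub>F i in sequentially. (real (k i) + 1) / real (t i + 2 * k i) \<le> \<epsilon>"
  using frequently_gt_if_not_bdd_above[OF unb, of "2 / \<epsilon>"]
proof (rule frequently_elim1)
  fix i assume slope: "2 / \<epsilon> < (real (t i) - 1) / real (k i)"
  have k0: "real (k i) \<ge> 1" using k[of i] by simp
  then have "2 * real (k i) < \<epsilon> * (real (t i) - 1)"
    using slope \<open>\<epsilon> > 0\<close> by (simp add: field_simps)
  also have "\<dots> \<le> \<epsilon> * real (t i + 2 * k i)"
    using \<open>\<epsilon> > 0\<close> by (intro mult_left_mono) auto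
  finally have "2 * real (k i) < \<epsilon> * real (t i + 2 * k i)" .
  moreover have "real (k i) + 1 \<le> 2 * real (k i)" using k0 by simp
  ultimately show "(real (k i) + 1) / real (t i + 2 * k i) \<le> \<epsilon>"
    using k0 by (simp add: field_simps)
qed

definition xlnx_step :: "real \<Rightarrow> real" where
  "xlnx_step a = a * ln a - (a - 1) * ln (a - 1)"

lemma hfun_eq_xlnx_step: "hfun p x = (x * ln p + xlnx_step (p + x * (p - 1))) / (x + 2)"
proof -
  have shift: "p + x * (p - 1) - 1 = (p - 1) + x * (p - 1)" by simp
  show ?thesis unfolding hfun_def xlnx_step_def shift by (simp add: divide_inverse mult.commute)
qed

lemma binom_entropy_eq_xlnx_step:
  assumes "0 < k" "k < N"
  shows "binom_entropy N k = k * xlnx_step (N / k)"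
proof -
  have "N / k - 1 = (N - k) / k" using assms by (simp add: field_simps)
  then show ?thesis
    unfolding binom_entropy_def xlnx_step_def using assms by (simp add: ln_div field_simps)
qed

text \<open>The leading term of \<open>ln |M(t,k)| / (t + 2k)\<close>, written in terms of the slope
  \<open>\<rho> = (t - 1) / k\<close> and of \<open>1 / k\<close>, which tends to \<open>0\<close>.\<close>

lemma entropy_rate_eq_slope_form:
  assumes p: "p \<ge> 1" and t: "t \<ge> 1" and k: "k \<ge> 1"
  defines "\<rho> \<equiv> (real t - 1) / real k"
  shows "(real (t - 1) * ln (real p) + binom_entropy (real (raney_top p t k)) (real k)) / real (t + 2 * k)
     = (\<rho> * ln (real p) + xlnx_step (real p + 2 * real p / real k + \<rho> * (real p - 1))) / (\<rho> + 2 + 1 / real k)"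
proof -
  have k0: "real k > 0" using k by simp
  have top_gt: "real (raney_top p t k) > real k"
    using raney_top_bounds(1)[OF p, where t=t and k=k] by simp
  have top_div: "real (raney_top p t k) / real k = real p + 2 * real p / real k + \<rho> * (real p - 1)"
    unfolding \<rho>_def raney_top_def slot_count_def using k0 t p by (simp add: field_simps)
  have trunk: "real (t - 1) = real k * \<rho>"
    unfolding \<rho>_def using k0 t by simp
  have "real (t - 1) * ln (real p) + binom_entropy (real (raney_top p t k)) (real k)
     = real k * (\<rho> * ln (real p) + xlnx_step (real p + 2 * real p / real k + \<rho> * (real p - 1)))"
    unfolding binom_entropy_eq_xlnx_step[OF k0 top_gt] top_div trunk by (simp add: algebra_simps)
  moreover have "real (t + 2 * k) = real k * (\<rho> + 2 + 1 / real k)"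
    unfolding \<rho>_def using k0 by (simp add: field_simps)
  ultimately show ?thesis using k0 by simp
qed

lemma inverse_tendsto_0_if_slope_converges:
  assumes t: "\<And>i. t i \<ge> 1" and k: "\<And>i. k i \<ge> 1"
    and K: "filterlim (\<lambda>i. real (t i + 2 * k i)) at_top sequentially"
    and slope: "(\<lambda>i. (real (t i) - 1) / real (k i)) \<longlonglongrightarrow> x"
  shows "(\<lambda>i. 1 / real (k i)) \<longlonglongrightarrow> 0"
proof (rule tendsto_sandwich[of "\<lambda>i. 0" _ _ "\<lambda>i. ((real (t i) - 1) / real (k i) + 3) * inverse (real (t i + 2 * k i))"])
  show "\<forall>\<^sub>F i in sequentially. 1 / real (k i)
      \<le> ((real (t i) - 1) / real (k i) + 3) * inverse (real (t i + 2 * k i))"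
  proof (intro always_eventually allI)
    fix i
    define \<rho> where "\<rho> = (real (t i) - 1) / real (k i)"
    have k0: "real (k i) > 0" using k[of i] by simp
    have "\<rho> \<ge> 0" "1 / real (k i) \<le> 1" using t[of i] k[of i] unfolding \<rho>_def by simp_all
    have "real (t i + 2 * k i) = real (k i) * (\<rho> + 2 + 1 / real (k i))"
      unfolding \<rho>_def using k0 by (simp add: field_simps)
    also have "\<dots> \<le> real (k i) * (\<rho> + 3)"
      using \<open>1 / real (k i) \<le> 1\<close> k0 by (intro mult_left_mono) auto
    finally show "1 / real (k i) \<le> (\<rho> + 3) * inverse (real (t i + 2 * k i))"
      using k0 t[of i] \<open>\<rho> \<ge> 0\<close> by (simp add: field_simps)
  qed
  have "(\<lambda>i. ((real (t i) - 1) / real (k i) + 3) * inverse (real (t i + 2 * k i))) \<longlonglongrightarrow> (x + 3) * 0"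
    by (intro tendsto_intros slope tendsto_inverse_0_at_top K)
  then show "(\<lambda>i. ((real (t i) - 1) / real (k i) + 3) * inverse (real (t i + 2 * k i))) \<longlonglongrightarrow> 0"
    by simp
qed simp_all

lemma entropy_rate_tendsto_hfun:
  assumes p: "p \<ge> 2" and t: "\<And>i. t i \<ge> 1" and k: "\<And>i. k i \<ge> 1" and x: "x \<ge> 0"
    and slope: "(\<lambda>i. (real (t i) - 1) / real (k i)) \<longlonglongrightarrow> x"
    and inv_k: "(\<lambda>i. 1 / real (k i)) \<longlonglongrightarrow> 0"
  shows "(\<lambda>i. (real (t i - 1) * ln (real p) + binom_entropy (real (raney_top p (t i) (k i))) (real (k i)))
      / real (t i + 2 * k i)) \<longlonglongrightarrow> hfun (real p) x"
proof -
  let ?\<rho> = "\<lambda>i. (real (t i) - 1) / real (k i)"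
  have "0 \<le> x * (real p - 1)" "2 \<le> real p" using p x by simp_all
  then have "1 < real p + 0 + x * (real p - 1)" by linarith
  moreover have "(\<lambda>i. real p + 2 * real p * (1 / real (k i)) + ?\<rho> i * (real p - 1))
      \<longlonglongrightarrow> real p + 2 * real p * 0 + x * (real p - 1)"
    by (intro tendsto_intros inv_k slope)
  then have lim_arg: "(\<lambda>i. real p + 2 * real p / real (k i) + ?\<rho> i * (real p - 1))
      \<longlonglongrightarrow> real p + 0 + x * (real p - 1)"
    by simp
  ultimately have "(\<lambda>i. xlnx_step (real p + 2 * real p / real (k i) + ?\<rho> i * (real p - 1)))
      \<longlonglongrightarrow> xlnx_step (real p + 0 + x * (real p - 1))"
    unfolding xlnx_step_def by (intro tendsto_intros lim_arg) auto
  then have "(\<lambda>i. (?\<rho> i * ln (real p) + xlnx_step (real p + 2 * real p / real (k i) + ?\<rho> i * (real p - 1)))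
      / (?\<rho> i + 2 + 1 / real (k i)))
      \<longlonglongrightarrow> (x * ln (real p) + xlnx_step (real p + 0 + x * (real p - 1))) / (x + 2 + 0)"
    using x by (intro tendsto_intros slope inv_k) auto
  then show ?thesis
    using entropy_rate_eq_slope_form[of p "t _" "k _"] p t k unfolding hfun_eq_xlnx_step by simp
qed

lemma ln_fim_count_div_error_le:
  fixes p t k :: nat
  assumes p: "p \<ge> 1" and t: "t \<ge> 1"
  defines "K \<equiv> real (t + 2 * k)"
  shows "\<bar>ln (fim_count p t k) / K
      - (real (t - 1) * ln (real p) + binom_entropy (real (raney_top p t k)) (real k)) / K\<bar>
    \<le> (ln (real p + 1) + 2 + 3 * ln (2 * real p + 3)) * (1 / K) + 3 * (ln K / K)"
proof -
  have K: "K \<ge> 1" using t unfolding K_def by simp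
  have "real (raney_top p t k) + 1 \<le> (2 * real p + 3) * K"
    using raney_top_le[OF p t, of k] K unfolding K_def by (simp add: algebra_simps)
  then have "ln (real (raney_top p t k) + 1) \<le> ln ((2 * real p + 3) * K)"
    using K by simp
  also have "\<dots> = ln (2 * real p + 3) + ln K" using K by (simp add: ln_mult)
  finally have "ln (real (raney_top p t k) + 1) \<le> ln (2 * real p + 3) + ln K" .
  then have "\<bar>ln (fim_count p t k)
      - (real (t - 1) * ln (real p) + binom_entropy (real (raney_top p t k)) (real k))\<bar>
      \<le> ln (real p + 1) + 2 + 3 * ln (2 * real p + 3) + 3 * ln K"
    using ln_fim_count_approx[OF p, of t k] by linarith
  then show ?thesis
    using K by (simp add: field_simps flip: diff_divide_distrib)
qed

lemma ln_fim_count_div_tendsto_hfun: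
  assumes p: "p \<ge> 2" and t: "\<And>i. t i \<ge> 1" and k: "\<And>i. k i \<ge> 1" and x: "x \<ge> 0"
    and K: "filterlim (\<lambda>i. real (t i + 2 * k i)) at_top sequentially"
    and slope: "(\<lambda>i. (real (t i) - 1) / real (k i)) \<longlonglongrightarrow> x"
  shows "(\<lambda>i. ln (fim_count p (t i) (k i)) / real (t i + 2 * k i)) \<longlonglongrightarrow> hfun (real p) x"
proof -
  define rate where "rate i = ln (fim_count p (t i) (k i)) / real (t i + 2 * k i)" for i
  define main where "main i =
    (real (t i - 1) * ln (real p) + binom_entropy (real (raney_top p (t i) (k i))) (real (k i)))
      / real (t i + 2 * k i)" for i
  define err where "err i = (ln (real p + 1) + 2 + 3 * ln (2 * real p + 3)) * (1 / real (t i + 2 * k i))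
      + 3 * (ln (real (t i + 2 * k i)) / real (t i + 2 * k i))" for i
  have "(\<lambda>i. 1 / real (t i + 2 * k i)) \<longlonglongrightarrow> 0"
    using tendsto_inverse_0_at_top[OF K] by (simp add: divide_inverse)
  moreover have "(\<lambda>i. ln (real (t i + 2 * k i)) / real (t i + 2 * k i)) \<longlonglongrightarrow> 0"
    using filterlim_compose[OF ln_x_over_x_tendsto_0 K] .
  ultimately have "err \<longlonglongrightarrow> (ln (real p + 1) + 2 + 3 * ln (2 * real p + 3)) * 0 + 3 * 0"
    unfolding err_def by (intro tendsto_intros)
  then have err: "err \<longlonglongrightarrow> 0" by simp
  have bound: "\<bar>rate i - main i\<bar> \<le> err i" for i
    using ln_fim_count_div_error_le[of p "t i" "k i"] p t[of i] unfolding rate_def main_def err_def by simp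
  have "(\<lambda>i. rate i - main i) \<longlonglongrightarrow> 0"
  proof (rule tendsto_sandwich[of "\<lambda>i. - err i" _ _ err])
    show "\<forall>\<^sub>F i in sequentially. - err i \<le> rate i - main i"
      using bound by (intro always_eventually allI) (metis abs_le_D2 minus_le_iff)
    show "\<forall>\<^sub>F i in sequentially. rate i - main i \<le> err i"
      using bound by (intro always_eventually allI) (metis abs_le_D1)
    show "(\<lambda>i. - err i) \<longlonglongrightarrow> 0"
      using tendsto_minus[OF err] by simp
  qed (fact err)
  moreover have "main \<longlonglongrightarrow> hfun (real p) x"
    unfolding main_def
    using entropy_rate_tendsto_hfun[OF p t k x slope inverse_tendsto_0_if_slope_converges[OF t k K slope]] .
  ultimately have "(\<lambda>i. main i + (rate i - main i)) \<longlonglongrightarrow> hfun (real p) x + 0"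
    by (intro tendsto_intros)
  then show ?thesis unfolding rate_def by simp
qed

lemma card_M_powr_eq:
  assumes "finite X" "card X \<ge> 1" "t \<ge> 1"
  shows "real (card (M X t k)) powr (1 / real (t + 2 * k))
    = exp (ln (fim_count (2 * card X - 1) t k) / real (t + 2 * k))"
proof -
  have "2 * card X - 1 \<ge> 1" using assms(2) by simp
  then have "fim_count (2 * card X - 1) t k \<noteq> 0"
    using fim_count_pos[of "2 * card X - 1" t k] by linarith
  then show ?thesis
    unfolding card_M_eq_fim_count[OF assms] powr_def by simp
qed

lemma fim_growth_le_if_bdd_above:
  assumes p: "p \<ge> 1" and t: "\<And>i. t i \<ge> 1"
    and lim: "(\<lambda>i. exp (ln (fim_count p (t i) (k i)) / real (t i + 2 * k i))) \<longlonglongrightarrow> y"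
    and K: "filterlim (\<lambda>i. t i + 2 * k i) at_top sequentially" and "bdd_above (range k)"
  shows "y \<le> real p"
proof (rule fim_growth_le[OF p t lim])
  fix \<epsilon> :: real assume "\<epsilon> > 0"
  with eventually_ratio_le_if_bdd_above[OF \<open>bdd_above (range k)\<close> K]
  show "\<exists>\<^sub>F i in sequentially. (real (k i) + 1) / real (t i + 2 * k i) \<le> \<epsilon>"
    by (simp add: eventually_frequently)
qed

lemma fim_growth_le_if_unbounded_slope:
  assumes p: "p \<ge> 1" and t: "\<And>i. t i \<ge> 1" and k: "\<And>i. k i \<ge> 1"
    and lim: "(\<lambda>i. exp (ln (fim_count p (t i) (k i)) / real (t i + 2 * k i))) \<longlonglongrightarrow> y"
    and unb: "\<not> bdd_above (range (\<lambda>i. (real (t i) - 1) / real (k i)))"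
  shows "y \<le> real p"
  using fim_growth_le[OF p t lim] frequently_ratio_le_if_unbounded_slope[OF k unb] by blast

lemma fim_growth_eq_exp_hfun:
  assumes p: "p \<ge> 2" and t: "\<And>i. t i \<ge> 1" and k: "\<And>i. k i \<ge> 1" and x: "x \<ge> 0"
    and lim: "(\<lambda>i. exp (ln (fim_count p (t i) (k i)) / real (t i + 2 * k i))) \<longlonglongrightarrow> y"
    and K: "filterlim (\<lambda>i. t i + 2 * k i) at_top sequentially"
    and r: "strict_mono r" and slope: "(\<lambda>n. (real (t (r n)) - 1) / real (k (r n))) \<longlonglongrightarrow> x"
  shows "y = exp (hfun (real p) x)"
proof -
  have "filterlim (\<lambda>n. real (t (r n) + 2 * k (r n))) at_top sequentially"
    using filterlim_compose[OF filterlim_real_sequentially filterlim_compose[OF K filterlim_subseq[OF r]]]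
    by (simp add: o_def)
  from ln_fim_count_div_tendsto_hfun[OF p t k x this slope]
  have "(\<lambda>n. exp (ln (fim_count p (t (r n)) (k (r n))) / real (t (r n) + 2 * k (r n))))
      \<longlonglongrightarrow> exp (hfun (real p) x)"
    by (rule tendsto_exp)
  moreover have "(\<lambda>n. exp (ln (fim_count p (t (r n)) (k (r n))) / real (t (r n) + 2 * k (r n))))
      \<longlonglongrightarrow> y"
    using LIMSEQ_subseq_LIMSEQ[OF lim r] by (simp add: o_def)
  ultimately show ?thesis using LIMSEQ_unique by metis
qed

theorem mainTheorem9:
  fixes X :: "'a set" and K t k :: "nat \<Rightarrow> nat" and y :: real
  assumes "finite X" and "card X \<ge> 2"
    and "\<And>i. t i \<ge> 1"
    and "\<And>i. K i = t i + 2 * k i"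
    and "filterlim K at_top sequentially"
    and "(\<lambda>i. real (card (M X (t i) (k i))) powr (1 / real (K i))) \<longlonglongrightarrow> y"
  shows "(bdd_above (range k) \<longrightarrow> y \<le> real (2 * card X - 1))
    \<and> ((\<forall>i. k i \<ge> 1) \<and> \<not> bdd_above (range (\<lambda>i. (real (t i) - 1) / real (k i)))
         \<longrightarrow> y \<le> real (2 * card X - 1))
    \<and> (\<forall>x::real. x \<ge> 0 \<longrightarrow> (\<forall>i. k i \<ge> 1) \<longrightarrow>
         (\<exists>r. strict_mono r \<and> ((\<lambda>n. (real (t (r n)) - 1) / real (k (r n))) \<longlonglongrightarrow> x))
         \<longrightarrow> y = exp (hfun (real (2 * card X - 1)) x))"
proof -
  define p where "p = 2 * card X - 1"
  have p: "p \<ge> 2" "p \<ge> 1" using assms(2) unfolding p_def by simp_all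
  have lim: "(\<lambda>i. exp (ln (fim_count p (t i) (k i)) / real (t i + 2 * k i))) \<longlonglongrightarrow> y"
    using assms(6) card_M_powr_eq[OF assms(1) _ assms(3)] assms(2,4) unfolding p_def by simp
  have K: "filterlim (\<lambda>i. t i + 2 * k i) at_top sequentially"
    using assms(5) unfolding assms(4) .
  show ?thesis
    unfolding p_def[symmetric]
  proof (intro conjI impI allI)
    show "y \<le> real p" if "bdd_above (range k)"
      using fim_growth_le_if_bdd_above[OF p(2) assms(3) lim K that] .
    show "y \<le> real p" if "(\<forall>i. k i \<ge> 1) \<and> \<not> bdd_above (range (\<lambda>i. (real (t i) - 1) / real (k i)))"
    proof -
      from that have "\<And>i. k i \<ge> 1" "\<not> bdd_above (range (\<lambda>i. (real (t i) - 1) / real (k i)))"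
        by auto
      then show ?thesis by (rule fim_growth_le_if_unbounded_slope[OF p(2) assms(3) _ lim])
    qed
    fix x :: real
    assume "x \<ge> 0" "\<forall>i. k i \<ge> 1"
      and "\<exists>r. strict_mono r \<and> (\<lambda>n. (real (t (r n)) - 1) / real (k (r n))) \<longlonglongrightarrow> x"
    then show "y = exp (hfun (real p) x)"
      using fim_growth_eq_exp_hfun[OF p(1) assms(3) _ _ lim K] by blast
  qed
qed

end
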